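(* Let $t$ be a join node of a rooted nice tree decomposition of the Tanner graph $G$ with children $t_1,t_2$ ($B_t=B_{t_1}=B_{t_2}$). For $R\subseteq B_t^c$, $Q\subseteq B_t^v$ let $$F_t(R,Q)=\min\{f_{t_1}(R_1,Q)+f_{t_2}(R_2,Q)-|Q|\},\qquad G_t(R,Q)=\sum g_{t_1}(R_1,Q)\,g_{t_2}(R_2,Q),$$ where the minimum is over all pairs $(R_1,R_2)$ of subsets of $B_t^c$ with $R=R_1\oplus R_2\oplus\Gamma_o(G_t[Q\cup B_t^c])$, and the sum is over those pairs attaining the minimum. Then for all $R\subseteq B_t^c$, $Q\subseteq B_t^v$: if $Q\neq\emptyset$, $f_t(R,Q)=F_t(R,Q)$ and $g_t(R,Q)=G_t(R,Q)$; if $Q=\emptyset$, $f_t(R,Q)=\min\{F_t(R,Q),f_{t_1}(R,Q),f_{t_2}(R,Q)\}$ and $$g_t(R,Q)=\mathbb 1_{f_t(R,Q)=F_t(R,Q)}G_t(R,Q)+\mathbb 1_{f_t(R,Q)=f_{t_1}(R,Q)}g_{t_1}(R,Q)+\mathbb 1_{f_t(R,Q)=f_{t_2}(R,Q)}g_{t_2}(R,Q),$$ where $\mathbb 1_{x=y}$ is $1$ if $x=y$ and $0$ otherwise (whenever the minimum value is finite).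
   Context: $G=(\mathcal L\cup\mathcal R,E)$ is a Tanner graph (bipartite, variable nodes $\mathcal L$, check nodes $\mathcal R$). For a subgraph $H$ of $G$ and $S\subseteq\mathcal L$ in $H$, $H[S]$ is the subgraph of $H$ induced by $S$ together with its neighbours in $H$; for $L\subseteq\mathcal L$, $R\subseteq\mathcal R$, $H[L\cup R]$ is the subgraph of $H$ induced on the vertex set $L\cup R$. $\Gamma_o(\cdot)$ is the set of odd-degree check nodes in the indicated subgraph; $\oplus$ is symmetric difference. A trapping set is a nonempty subset of $\mathcal L$. A rooted nice tree decomposition $(T,(B_t))$ is a rooted tree decomposition (every vertex and edge lies in some bag; bags containing a given vertex form a connected subtree) where every node has at most two children, root and leaves have empty bags, a node with two children (join node) has the same bag as each child, and a node $t$ with one child $t'$ has $B_t=B_{t'}\cup\{v\}$ or $B_t=B_{t'}\setminus\{v\}$. For a node $t$: $B_t^c=B_t\cap\mathcal R$, $B_t^v=B_t\cap\mathcal L$; $G_t$ is the subgraph of $G$ induced on the union of the bags of all descendants of $t$ (including $t$); $\mathcal L(G_t)$ is its set of variable nodes. A trapping set $S$ has parameters $(R,Q)$ in $G_t$ ($R\subseteq B_t^c$, $Q\subseteq B_t^v$) if $S\subseteq\mathcal L(G_t)$, $S\cap B_t^v=Q$, and $\Gamma_o(G_t[S])=R$. $f_t(R,Q)$ is the minimum size of a trapping set with parameters $(R,Q)$ in $G_t$ ($+\infty$ if none exists), and $g_t(R,Q)$ is the number of trapping sets with parameters $(R,Q)$ in $G_t$ of size $f_t(R,Q)$ ($0$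 if none exists). *)

theory Defs
  imports Main "HOL-Library.Extended_Nat"
begin

record 'v tgraph =
  vars :: "'v set"
  checks :: "'v set"
  edges :: "('v \<times> 'v) set"

definition tanner_graph :: "'v tgraph \<Rightarrow> bool" where
  "tanner_graph G \<longleftrightarrow> finite (vars G) \<and> finite (checks G) \<and>
     vars G \<inter> checks G = {} \<and> edges G \<subseteq> vars G \<times> checks G"

definition induced_on :: "'v tgraph \<Rightarrow> 'v set \<Rightarrow> 'v tgraph" where
  "induced_on H X = \<lparr>vars = vars H \<inter> X, checks = checks H \<inter> X,
                      edges = edges H \<inter> (X \<times> X)\<rparr>"

definition nbrs :: "'v tgraph \<Rightarrow> 'v set \<Rightarrow> 'v set" where
  "nbrs H S = {c \<in> checks H. \<exists>l\<in>S. (l, c) \<in> edges H}"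

text \<open>H[S] for a set S of variable nodes: induced by S together with its neighbours.\<close>
definition induced_by_vars :: "'v tgraph \<Rightarrow> 'v set \<Rightarrow> 'v tgraph" where
  "induced_by_vars H S = induced_on H (S \<union> nbrs H S)"

definition deg :: "'v tgraph \<Rightarrow> 'v \<Rightarrow> nat" where
  "deg H c = card {l \<in> vars H. (l, c) \<in> edges H}"

definition Gamma_o :: "'v tgraph \<Rightarrow> 'v set" where
  "Gamma_o H = {c \<in> checks H. odd (deg H c)}"

definition symdiff :: "'a set \<Rightarrow> 'a set \<Rightarrow> 'a set" (infixl "\<oplus>" 65) where
  "A \<oplus> B = (A - B) \<union> (B - A)"

definition par_rel :: "'n set \<Rightarrow> 'n \<Rightarrow> ('n \<Rightarrow> 'n) \<Rightarrow> ('n \<times> 'n) set" where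
  "par_rel N r par = {(s, par s) | s. s \<in> N - {r}}"

definition rooted_tree :: "'n set \<Rightarrow> 'n \<Rightarrow> ('n \<Rightarrow> 'n) \<Rightarrow> bool" where
  "rooted_tree N r par \<longleftrightarrow> finite N \<and> r \<in> N \<and> (\<forall>s \<in> N - {r}. par s \<in> N) \<and>
     (\<forall>s \<in> N. (s, r) \<in> (par_rel N r par)\<^sup>*)"

definition children :: "'n set \<Rightarrow> 'n \<Rightarrow> ('n \<Rightarrow> 'n) \<Rightarrow> 'n \<Rightarrow> 'n set" where
  "children N r par t = {s \<in> N - {r}. par s = t}"

definition descendants :: "'n set \<Rightarrow> 'n \<Rightarrow> ('n \<Rightarrow> 'n) \<Rightarrow> 'n \<Rightarrow> 'n set" where
  "descendants N r par t = {s. (s, t) \<in> (par_rel N r par)\<^sup>*}"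

definition tree_connected :: "'n set \<Rightarrow> 'n \<Rightarrow> ('n \<Rightarrow> 'n) \<Rightarrow> 'n set \<Rightarrow> bool" where
  "tree_connected N r par X \<longleftrightarrow>
     (\<forall>a\<in>X. \<forall>b\<in>X. (a, b) \<in> ((par_rel N r par \<union> (par_rel N r par)\<inverse>) \<inter> (X \<times> X))\<^sup>*)"

definition tree_decomposition ::
  "'v tgraph \<Rightarrow> 'n set \<Rightarrow> 'n \<Rightarrow> ('n \<Rightarrow> 'n) \<Rightarrow> ('n \<Rightarrow> 'v set) \<Rightarrow> bool" where
  "tree_decomposition G N r par B \<longleftrightarrow> rooted_tree N r par \<and>
     (\<forall>s\<in>N. B s \<subseteq> vars G \<union> checks G) \<and>
     (\<forall>v \<in> vars G \<union> checks G. \<exists>s\<in>N. v \<in> B s) \<and>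
     (\<forall>(l, c) \<in> edges G. \<exists>s\<in>N. l \<in> B s \<and> c \<in> B s) \<and>
     (\<forall>v \<in> vars G \<union> checks G. tree_connected N r par {s \<in> N. v \<in> B s})"

definition nice_tree_decomposition ::
  "'v tgraph \<Rightarrow> 'n set \<Rightarrow> 'n \<Rightarrow> ('n \<Rightarrow> 'n) \<Rightarrow> ('n \<Rightarrow> 'v set) \<Rightarrow> bool" where
  "nice_tree_decomposition G N r par B \<longleftrightarrow> tree_decomposition G N r par B \<and>
     (\<forall>s\<in>N. card (children N r par s) \<le> 2) \<and>
     B r = {} \<and>
     (\<forall>s\<in>N. children N r par s = {} \<longrightarrow> B s = {}) \<and>
     (\<forall>s\<in>N. card (children N r par s) = 2 \<longrightarrow> (\<forall>c \<in> children N r par s. B c = B s)) \<and>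
     (\<forall>s\<in>N. \<forall>c. children N r par s = {c} \<longrightarrow>
        (\<exists>v. B s = B c \<union> {v} \<or> B s = B c - {v}))"

definition subG :: "'v tgraph \<Rightarrow> 'n set \<Rightarrow> 'n \<Rightarrow> ('n \<Rightarrow> 'n) \<Rightarrow> ('n \<Rightarrow> 'v set) \<Rightarrow> 'n \<Rightarrow> 'v tgraph" where
  "subG G N r par B t = induced_on G (\<Union>s \<in> descendants N r par t. B s)"

definition has_params ::
  "'v tgraph \<Rightarrow> 'n set \<Rightarrow> 'n \<Rightarrow> ('n \<Rightarrow> 'n) \<Rightarrow> ('n \<Rightarrow> 'v set) \<Rightarrow> 'n \<Rightarrow> 'v set \<Rightarrow> 'v set \<Rightarrow> 'v set \<Rightarrow> bool" where
  "has_params G N r par B t R Q S \<longleftrightarrow>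
     S \<noteq> {} \<and> S \<subseteq> vars G \<and>
     S \<subseteq> vars (subG G N r par B t) \<and>
     S \<inter> (B t \<inter> vars G) = Q \<and>
     Gamma_o (induced_by_vars (subG G N r par B t) S) = R"

definition f_t ::
  "'v tgraph \<Rightarrow> 'n set \<Rightarrow> 'n \<Rightarrow> ('n \<Rightarrow> 'n) \<Rightarrow> ('n \<Rightarrow> 'v set) \<Rightarrow> 'n \<Rightarrow> 'v set \<Rightarrow> 'v set \<Rightarrow> enat" where
  "f_t G N r par B t R Q = (INF S \<in> {S. has_params G N r par B t R Q S}. enat (card S))"

definition g_t ::
  "'v tgraph \<Rightarrow> 'n set \<Rightarrow> 'n \<Rightarrow> ('n \<Rightarrow> 'n) \<Rightarrow> ('n \<Rightarrow> 'v set) \<Rightarrow> 'n \<Rightarrow> 'v set \<Rightarrow> 'v set \<Rightarrow> nat" where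
  "g_t G N r par B t R Q =
     card {S. has_params G N r par B t R Q S \<and> enat (card S) = f_t G N r par B t R Q}"

definition join_pairs ::
  "'v tgraph \<Rightarrow> 'n set \<Rightarrow> 'n \<Rightarrow> ('n \<Rightarrow> 'n) \<Rightarrow> ('n \<Rightarrow> 'v set) \<Rightarrow> 'n \<Rightarrow> 'v set \<Rightarrow> 'v set \<Rightarrow> ('v set \<times> 'v set) set" where
  "join_pairs G N r par B t R Q =
     {(R1, R2). R1 \<subseteq> B t \<inter> checks G \<and> R2 \<subseteq> B t \<inter> checks G \<and>
        R = R1 \<oplus> R2 \<oplus> Gamma_o (induced_on (subG G N r par B t) (Q \<union> (B t \<inter> checks G)))}"

definition F_join ::
  "'v tgraph \<Rightarrow> 'n set \<Rightarrow> 'n \<Rightarrow> ('n \<Rightarrow> 'n) \<Rightarrow> ('n \<Rightarrow> 'v set) \<Rightarrow> 'n \<Rightarrow> 'n \<Rightarrow> 'n \<Rightarrow> 'v set \<Rightarrow> 'v set \<Rightarrow> enat" where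
  "F_join G N r par B t t1 t2 R Q =
     (INF p \<in> join_pairs G N r par B t R Q.
        f_t G N r par B t1 (fst p) Q + f_t G N r par B t2 (snd p) Q - enat (card Q))"

definition G_join ::
  "'v tgraph \<Rightarrow> 'n set \<Rightarrow> 'n \<Rightarrow> ('n \<Rightarrow> 'n) \<Rightarrow> ('n \<Rightarrow> 'v set) \<Rightarrow> 'n \<Rightarrow> 'n \<Rightarrow> 'n \<Rightarrow> 'v set \<Rightarrow> 'v set \<Rightarrow> nat" where
  "G_join G N r par B t t1 t2 R Q =
     (\<Sum>p \<in> {p \<in> join_pairs G N r par B t R Q.
               f_t G N r par B t1 (fst p) Q + f_t G N r par B t2 (snd p) Q - enat (card Q)
                 = F_join G N r par B t t1 t2 R Q}.
        g_t G N r par B t1 (fst p) Q * g_t G N r par B t2 (snd p) Q)"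

end

theory Submission
  imports Defs
begin

(* Let S be a trapping set of G_t and S_i = S \<inter> V(G_t_i). Since the bag B_t separates the two
   subtrees, S_1 \<inter> S_2 = S \<inter> B_t = Q, a check outside B_t sees the variables of only one side, and
   a check in B_t has degree deg S_1 + deg S_2 - deg Q. Hence
   \<Gamma>_o(S) = \<Gamma>_o(S_1) \<oplus> \<Gamma>_o(S_2) \<oplus> \<Gamma>_o(G_t[Q \<union> B_t^c]), and conversely two trapping sets of the
   children with the same trace Q glue to one of G_t of size |S_1| + |S_2| - |Q|. So the trapping
   sets of G_t meeting both subtrees are, size-shifted by |Q|, the disjoint union over the
   admissible pairs (R_1, R_2) of products of trapping sets of the children: minima add and
   numbers of minimisers multiply. If Q \<noteq> {} every trapping set meets both subtrees; if Q = {} it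
   may lie inside one subtree, and then it is simply a trapping set of that child. *)

section \<open>Minimum size and number of minimum-size members of a family of sets\<close>

definition min_card :: "'a set set \<Rightarrow> enat" where
  "min_card X = (INF S\<in>X. enat (card S))"

definition count_card :: "'a set set \<Rightarrow> enat \<Rightarrow> nat" where
  "count_card X k = card {S \<in> X. enat (card S) = k}"

lemma min_card_le: "S \<in> X \<Longrightarrow> min_card X \<le> enat (card S)"
  unfolding min_card_def by (rule INF_lower)

lemma min_card_empty [simp]: "min_card {} = \<infinity>"
  by (simp add: min_card_def top_enat_def)

lemma min_card_attained:
  assumes "X \<noteq> {}"
  obtains S where "S \<in> X" "min_card X = enat (card S)"
proof -
  obtain S where S: "S \<in> X" "\<And>S'. S' \<in> X \<Longrightarrow> card S \<le> card S'"
    using assms ex_has_least_nat[of "\<lambda>S. S \<in> X" _ card] by blast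
  have "min_card X = enat (card S)"
    unfolding min_card_def by (rule antisym[OF INF_lower[OF S(1)] INF_greatest]) (simp add: S(2))
  with S(1) show thesis by (rule that)
qed

lemma min_card_Un: "min_card (X \<union> Y) = min (min_card X) (min_card Y)"
  by (simp add: min_card_def INF_union inf_min)

lemma min_card_UN: "min_card (\<Union>i\<in>I. Y i) = (INF i\<in>I. min_card (Y i))"
  unfolding min_card_def by (rule antisym) (auto intro!: INF_greatest intro: INF_lower2)

lemma count_card_empty [simp]: "count_card {} k = 0"
  by (simp add: count_card_def)

lemma count_card_Un:
  assumes "finite X" "finite Y" "X \<inter> Y = {}"
  shows "count_card (X \<union> Y) k = count_card X k + count_card Y k"
proof -
  have "{S \<in> X \<union> Y. enat (card S) = k} = {S \<in> X. enat (card S) = k} \<union> {S \<in> Y. enat (card S) = k}"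
    by blast
  then show ?thesis
    unfolding count_card_def using assms by (simp add: card_Un_disjoint disjoint_iff)
qed

lemma count_card_UN:
  assumes "finite I" "\<And>i. i \<in> I \<Longrightarrow> finite (Y i)"
    and "\<And>i j. i \<in> I \<Longrightarrow> j \<in> I \<Longrightarrow> i \<noteq> j \<Longrightarrow> Y i \<inter> Y j = {}"
  shows "count_card (\<Union>i\<in>I. Y i) k = (\<Sum>i\<in>I. count_card (Y i) k)"
proof -
  have "{S \<in> (\<Union>i\<in>I. Y i). enat (card S) = k} = (\<Union>i\<in>I. {S \<in> Y i. enat (card S) = k})"
    by blast
  then show ?thesis
    unfolding count_card_def using assms by (simp add: card_UN_disjoint disjoint_iff)
qed

lemma count_card_below_min:
  assumes "k \<le> min_card X"
  shows "count_card X k = (if k = min_card X then count_card X (min_card X) else 0)"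
proof (cases "k = min_card X")
  case False
  then have none: "{S \<in> X. enat (card S) = k} = {}"
    using assms min_card_le by (fastforce simp: antisym)
  show ?thesis unfolding count_card_def none using False by simp
qed simp

lemma min_card_union_image_attained:
  assumes card_union: "\<And>a b. a \<in> X1 \<Longrightarrow> b \<in> X2 \<Longrightarrow> card (a \<union> b) + q = card a + card b"
    and a0: "a0 \<in> X1" "min_card X1 = enat (card a0)"
    and b0: "b0 \<in> X2" "min_card X2 = enat (card b0)"
  shows "min_card ((\<lambda>(a, b). a \<union> b) ` (X1 \<times> X2)) = enat (card (a0 \<union> b0))"
proof (rule antisym)
  show "min_card ((\<lambda>(a, b). a \<union> b) ` (X1 \<times> X2)) \<le> enat (card (a0 \<union> b0))"
    using a0(1) b0(1) by (intro min_card_le) blast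
  have "card (a0 \<union> b0) \<le> card (a \<union> b)" if "a \<in> X1" "b \<in> X2" for a b
  proof -
    have "card a0 \<le> card a" "card b0 \<le> card b"
      using min_card_le[OF that(1)] min_card_le[OF that(2)] a0(2) b0(2) by simp_all
    then show ?thesis using card_union[OF that] card_union[OF a0(1) b0(1)] by linarith
  qed
  then show "enat (card (a0 \<union> b0)) \<le> min_card ((\<lambda>(a, b). a \<union> b) ` (X1 \<times> X2))"
    unfolding min_card_def by (auto intro!: INF_greatest)
qed

lemma min_card_union_image:
  assumes card_union: "\<And>a b. a \<in> X1 \<Longrightarrow> b \<in> X2 \<Longrightarrow> card (a \<union> b) + q = card a + card b"
  shows "min_card ((\<lambda>(a, b). a \<union> b) ` (X1 \<times> X2)) = min_card X1 + min_card X2 - enat q"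
proof (cases "X1 = {} \<or> X2 = {}")
  case True
  then show ?thesis by auto
next
  case False
  then obtain a0 b0 where a0: "a0 \<in> X1" "min_card X1 = enat (card a0)"
    and b0: "b0 \<in> X2" "min_card X2 = enat (card b0)"
    by (metis min_card_attained)
  show ?thesis
    using min_card_union_image_attained[OF card_union a0 b0] card_union[OF a0(1) b0(1)] a0(2) b0(2)
    by simp
qed

lemma count_card_union_image:
  assumes card_union: "\<And>a b. a \<in> X1 \<Longrightarrow> b \<in> X2 \<Longrightarrow> card (a \<union> b) + q = card a + card b"
    and inj: "inj_on (\<lambda>(a, b). a \<union> b) (X1 \<times> X2)"
  shows "count_card ((\<lambda>(a, b). a \<union> b) ` (X1 \<times> X2)) (min_card ((\<lambda>(a, b). a \<union> b) ` (X1 \<times> X2)))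
    = count_card X1 (min_card X1) * count_card X2 (min_card X2)"
proof (cases "X1 = {} \<or> X2 = {}")
  case True
  then show ?thesis by auto
next
  case False
  then obtain a0 b0 where a0: "a0 \<in> X1" "min_card X1 = enat (card a0)"
    and b0: "b0 \<in> X2" "min_card X2 = enat (card b0)"
    by (metis min_card_attained)
  let ?M1 = "{a \<in> X1. enat (card a) = min_card X1}"
  let ?M2 = "{b \<in> X2. enat (card b) = min_card X2}"
  have minimisers: "{S \<in> (\<lambda>(a, b). a \<union> b) ` (X1 \<times> X2). enat (card S) = enat (card (a0 \<union> b0))}
      = (\<lambda>(a, b). a \<union> b) ` (?M1 \<times> ?M2)"
  proof (intro equalityI subsetI)
    fix S assume "S \<in> {S \<in> (\<lambda>(a, b). a \<union> b) ` (X1 \<times> X2). enat (card S) = enat (card (a0 \<union> b0))}"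
    then obtain a b where ab: "a \<in> X1" "b \<in> X2" "S = a \<union> b" "card (a \<union> b) = card (a0 \<union> b0)"
      by auto
    have "card a0 \<le> card a" "card b0 \<le> card b"
      using min_card_le[OF ab(1)] min_card_le[OF ab(2)] a0(2) b0(2) by simp_all
    then have "card a = card a0" "card b = card b0"
      using card_union[OF ab(1,2)] card_union[OF a0(1) b0(1)] ab(4) by linarith+
    then show "S \<in> (\<lambda>(a, b). a \<union> b) ` (?M1 \<times> ?M2)"
      using ab a0(2) b0(2) by auto
  next
    fix S assume "S \<in> (\<lambda>(a, b). a \<union> b) ` (?M1 \<times> ?M2)"
    then obtain a b where ab: "a \<in> X1" "b \<in> X2" "S = a \<union> b" "card a = card a0" "card b = card b0"
      using a0(2) b0(2) by auto
    then have "card S = card (a0 \<union> b0)"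
      using card_union[OF ab(1,2)] card_union[OF a0(1) b0(1)] by simp
    then show "S \<in> {S \<in> (\<lambda>(a, b). a \<union> b) ` (X1 \<times> X2). enat (card S) = enat (card (a0 \<union> b0))}"
      using ab by auto
  qed
  have "inj_on (\<lambda>(a, b). a \<union> b) (?M1 \<times> ?M2)"
    using inj by (rule inj_on_subset) blast
  then have "card ((\<lambda>(a, b). a \<union> b) ` (?M1 \<times> ?M2)) = card ?M1 * card ?M2"
    by (simp only: card_image card_cartesian_product)
  moreover note min_card_union_image_attained[OF card_union a0 b0]
  ultimately show ?thesis
    unfolding count_card_def by (simp only: minimisers)
qed

section \<open>Odd-degree checks of induced subgraphs\<close>

definition odd_checks :: "'v tgraph \<Rightarrow> 'v set \<Rightarrow> 'v set \<Rightarrow> 'v set" where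
  "odd_checks G W S = {c \<in> checks G \<inter> W. odd (card {l \<in> S. (l, c) \<in> edges G})}"

lemma mem_symdiff: "x \<in> A \<oplus> C \<longleftrightarrow> (x \<in> A) \<noteq> (x \<in> C)"
  unfolding symdiff_def by blast

lemma odd_checks_empty [simp]: "odd_checks G W {} = {}"
  by (simp add: odd_checks_def)

lemma odd_checks_subset: "odd_checks G W S \<subseteq> checks G \<inter> W"
  by (auto simp: odd_checks_def)

lemma induced_on_induced_on: "induced_on (induced_on H W) X = induced_on H (W \<inter> X)"
  by (simp add: induced_on_def Int_ac Times_Int_Times)

lemma Gamma_o_induced_on:
  "Gamma_o (induced_on H X) = {c \<in> checks H \<inter> X. odd (card {l \<in> vars H \<inter> X. (l, c) \<in> edges H})}"
proof -
  have "{l \<in> vars H \<inter> X. (l, c) \<in> edges H \<inter> X \<times> X} = {l \<in> vars H \<inter> X. (l, c) \<in> edges H}"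
    if "c \<in> X" for c
    using that by blast
  then show ?thesis
    unfolding Gamma_o_def deg_def by (auto simp: induced_on_def)
qed

lemma Gamma_o_induced_by_vars:
  assumes "tanner_graph G" and S: "S \<subseteq> vars G \<inter> W"
  shows "Gamma_o (induced_by_vars (induced_on G W) S) = odd_checks G W S"
proof -
  have disj: "vars G \<inter> checks G = {}"
    using assms(1) by (simp add: tanner_graph_def)
  define C where "C = nbrs (induced_on G W) S"
  have C: "C = {c \<in> checks G \<inter> W. \<exists>l\<in>S. (l, c) \<in> edges G}"
    using S unfolding C_def nbrs_def induced_on_def by auto
  have "vars G \<inter> (W \<inter> (S \<union> C)) = S" "checks G \<inter> (W \<inter> (S \<union> C)) = C"
    using S disj unfolding C by auto
  moreover have "c \<in> C" if "c \<in> checks G \<inter> W" "odd (card {l \<in> S. (l, c) \<in> edges G})" for c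
    using that odd_card_imp_not_empty[of "{l \<in> S. (l, c) \<in> edges G}"] unfolding C by auto
  ultimately show ?thesis
    unfolding induced_by_vars_def induced_on_induced_on Gamma_o_induced_on odd_checks_def C_def[symmetric]
    by (auto simp: C)
qed

lemma Gamma_o_induced_on_bag:
  assumes "tanner_graph G" and "Q \<subseteq> vars G \<inter> X" "X \<subseteq> W"
  shows "Gamma_o (induced_on (induced_on G W) (Q \<union> (X \<inter> checks G))) = odd_checks G X Q"
proof -
  have disj: "vars G \<inter> checks G = {}"
    using assms(1) by (simp add: tanner_graph_def)
  have "vars G \<inter> (W \<inter> (Q \<union> (X \<inter> checks G))) = Q" "checks G \<inter> (W \<inter> (Q \<union> (X \<inter> checks G))) = checks G \<inter> X"
    using assms disj by auto
  then show ?thesis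
    unfolding induced_on_induced_on Gamma_o_induced_on odd_checks_def by simp
qed

section \<open>Rooted trees given by a parent function\<close>

lemma par_rel_iff: "(a, b) \<in> par_rel N r par \<longleftrightarrow> a \<in> N \<and> a \<noteq> r \<and> b = par a"
  unfolding par_rel_def by auto

lemma par_rel_functional: "(a, b) \<in> par_rel N r par \<Longrightarrow> (a, c) \<in> par_rel N r par \<Longrightarrow> b = c"
  by (simp add: par_rel_iff)

lemma par_rel_ancestors_comparable:
  assumes "(x, y) \<in> (par_rel N r par)\<^sup>*" "(x, z) \<in> (par_rel N r par)\<^sup>*"
  shows "(y, z) \<in> (par_rel N r par)\<^sup>* \<or> (z, y) \<in> (par_rel N r par)\<^sup>*"
  using assms
proof (induction arbitrary: z rule: converse_rtrancl_induct)
  case base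
  then show ?case by blast
next
  case (step x w)
  from step.prems show ?case
  proof (cases rule: converse_rtranclE)
    case base
    then show ?thesis using step.hyps by (meson converse_rtrancl_into_rtrancl)
  next
    case (step w')
    then have "w' = w" using par_rel_functional \<open>(x, w) \<in> par_rel N r par\<close> by metis
    then show ?thesis using step step.IH by blast
  qed
qed

lemma par_rel_acyclic:
  assumes "(x, r) \<in> (par_rel N r par)\<^sup>*"
  shows "(x, x) \<notin> (par_rel N r par)\<^sup>+"
  using assms
proof (induction rule: converse_rtrancl_induct)
  case base
  then show ?case by (metis par_rel_iff tranclD)
next
  case (step x y)
  show ?case
  proof
    assume "(x, x) \<in> (par_rel N r par)\<^sup>+"
    then obtain w where "(x, w) \<in> par_rel N r par" "(w, x) \<in> (par_rel N r par)\<^sup>*"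
      by (meson tranclD)
    then have "(y, y) \<in> (par_rel N r par)\<^sup>+"
      using step.hyps(1) par_rel_functional by (metis rtrancl_into_trancl1)
    then show False using step.IH by blast
  qed
qed

lemma descendants_children:
  "descendants N r par t = insert t (\<Union>c\<in>children N r par t. descendants N r par c)"
proof (intro equalityI subsetI)
  fix s assume "s \<in> descendants N r par t"
  then have "(s, t) \<in> (par_rel N r par)\<^sup>*" by (simp add: descendants_def)
  then show "s \<in> insert t (\<Union>c\<in>children N r par t. descendants N r par c)"
  proof (cases rule: rtranclE)
    case (step c)
    then have "c \<in> children N r par t" by (auto simp: children_def par_rel_iff)
    with step show ?thesis by (auto simp: descendants_def)
  qed simp
next
  fix s assume "s \<in> insert t (\<Union>c\<in>children N r par t. descendants N r par c)"
  moreover have "(c, t) \<in> par_rel N r par" if "c \<in> children N r par t" for c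
    using that by (auto simp: children_def par_rel_iff)
  ultimately show "s \<in> descendants N r par t"
    by (auto simp: descendants_def intro: rtrancl_into_rtrancl)
qed

lemma descendants_subset: "x \<in> N \<Longrightarrow> descendants N r par x \<subseteq> N"
  unfolding descendants_def by (auto elim: converse_rtranclE simp: par_rel_iff)

lemma descendants_children_disjoint:
  assumes "rooted_tree N r par" "t \<in> N"
    and c: "c1 \<in> children N r par t" "c2 \<in> children N r par t" "c1 \<noteq> c2"
  shows "descendants N r par c1 \<inter> descendants N r par c2 = {}"
proof -
  have below_sibling: "(a, b) \<notin> (par_rel N r par)\<^sup>*"
    if "a \<in> children N r par t" "b \<in> children N r par t" "a \<noteq> b" for a b
  proof
    assume "(a, b) \<in> (par_rel N r par)\<^sup>*"
    then obtain w where "(a, w) \<in> par_rel N r par" "(w, b) \<in> (par_rel N r par)\<^sup>*"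
      using \<open>a \<noteq> b\<close> by (meson converse_rtranclE)
    moreover have "(a, t) \<in> par_rel N r par" "(b, t) \<in> par_rel N r par"
      using that by (auto simp: children_def par_rel_iff)
    ultimately have "(t, t) \<in> (par_rel N r par)\<^sup>+"
      using par_rel_functional by (metis rtrancl_into_trancl1)
    moreover have "(t, r) \<in> (par_rel N r par)\<^sup>*"
      using assms(1,2) by (simp add: rooted_tree_def)
    ultimately show False using par_rel_acyclic[of t r N par] by blast
  qed
  show ?thesis
  proof (rule ccontr)
    assume "descendants N r par c1 \<inter> descendants N r par c2 \<noteq> {}"
    then obtain s where "(s, c1) \<in> (par_rel N r par)\<^sup>*" "(s, c2) \<in> (par_rel N r par)\<^sup>*"
      by (auto simp: descendants_def)
    then show False
      using par_rel_ancestors_comparable below_sibling c by metis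
  qed
qed

lemma tree_connected_through_parent:
  assumes c: "c \<in> N" "c \<noteq> r" and X: "tree_connected N r par X"
    and a: "a \<in> X" "a \<in> descendants N r par c" and b: "b \<in> X" "b \<notin> descendants N r par c"
  shows "par c \<in> X"
proof (rule ccontr)
  assume par_notin: "par c \<notin> X"
  have "(a, b) \<in> ((par_rel N r par \<union> (par_rel N r par)\<inverse>) \<inter> (X \<times> X))\<^sup>*"
    using X a b unfolding tree_connected_def by blast
  then have "b \<in> descendants N r par c"
  proof (induction rule: rtrancl_induct)
    case base
    then show ?case using a by blast
  next
    case (step y z)
    then have y: "(y, c) \<in> (par_rel N r par)\<^sup>*" and z: "z \<in> X"
      by (auto simp: descendants_def)
    from step.hyps(2) consider "(y, z) \<in> par_rel N r par" | "(z, y) \<in> par_rel N r par"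
      by blast
    then show ?case
    proof cases
      case 1
      show ?thesis
      proof (cases "y = c")
        case True
        then show ?thesis using 1 c z par_notin by (simp add: par_rel_iff)
      next
        case False
        then obtain w where "(y, w) \<in> par_rel N r par" "(w, c) \<in> (par_rel N r par)\<^sup>*"
          using y by (meson converse_rtranclE)
        then show ?thesis using 1 par_rel_functional by (metis descendants_def mem_Collect_eq)
      qed
    next
      case 2
      then show ?thesis using y by (simp add: descendants_def converse_rtrancl_into_rtrancl)
    qed
  qed
  then show False using b by blast
qed

section \<open>Subtrees of a tree decomposition\<close>

lemma tree_decompositionD:
  assumes "tree_decomposition G N r par B"
  shows "rooted_tree N r par"
    and "\<And>s. s \<in> N \<Longrightarrow> B s \<subseteq> vars G \<union> checks G"
    and "\<And>l k. (l, k) \<in> edges G \<Longrightarrow> \<exists>s\<in>N. l \<in> B s \<and> k \<in> B s"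
    and "\<And>v. v \<in> vars G \<union> checks G \<Longrightarrow> tree_connected N r par {s \<in> N. v \<in> B s}"
  using assms unfolding tree_decomposition_def by blast+

definition subtree_vertices :: "'n set \<Rightarrow> 'n \<Rightarrow> ('n \<Rightarrow> 'n) \<Rightarrow> ('n \<Rightarrow> 'v set) \<Rightarrow> 'n \<Rightarrow> 'v set" where
  "subtree_vertices N r par B x = (\<Union>s\<in>descendants N r par x. B s)"

lemma subG_eq_induced_on: "subG G N r par B x = induced_on G (subtree_vertices N r par B x)"
  by (simp add: subG_def subtree_vertices_def)

lemma bag_subset_subtree_vertices: "B x \<subseteq> subtree_vertices N r par B x"
  unfolding subtree_vertices_def descendants_def by blast

lemma subtree_vertices_children:
  "subtree_vertices N r par B t = B t \<union> (\<Union>c\<in>children N r par t. subtree_vertices N r par B c)"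
  unfolding subtree_vertices_def by (subst descendants_children) simp

lemma bag_in_subtree:
  assumes td: "tree_decomposition G N r par B" and c: "c \<in> N" "c \<noteq> r"
    and x: "x \<in> subtree_vertices N r par B c" "x \<notin> B (par c)" and s: "s \<in> N" "x \<in> B s"
  shows "s \<in> descendants N r par c"
proof (rule ccontr)
  assume s_outside: "s \<notin> descendants N r par c"
  obtain s' where s': "s' \<in> descendants N r par c" "x \<in> B s'"
    using x(1) unfolding subtree_vertices_def by blast
  have "s' \<in> N" using descendants_subset[OF c(1)] s'(1) by blast
  then have "tree_connected N r par {s \<in> N. x \<in> B s}"
    using tree_decompositionD(2,4)[OF td] s'(2) by blast
  then have "par c \<in> {s \<in> N. x \<in> B s}"
    using tree_connected_through_parent[OF c] s' \<open>s' \<in> N\<close> s s_outside by blast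
  then show False using x(2) by blast
qed

lemma subtree_vertices_children_Int:
  assumes td: "tree_decomposition G N r par B" and "t \<in> N"
    and c: "c1 \<in> children N r par t" "c2 \<in> children N r par t" "c1 \<noteq> c2"
  shows "subtree_vertices N r par B c1 \<inter> subtree_vertices N r par B c2 \<subseteq> B t"
proof
  fix x assume x: "x \<in> subtree_vertices N r par B c1 \<inter> subtree_vertices N r par B c2"
  have c1: "c1 \<in> N" "c1 \<noteq> r" "par c1 = t" and "c2 \<in> N"
    using c by (auto simp: children_def)
  obtain s where s: "s \<in> descendants N r par c2" "x \<in> B s"
    using x unfolding subtree_vertices_def by blast
  have "s \<in> N" using descendants_subset[OF \<open>c2 \<in> N\<close>] s(1) by blast
  show "x \<in> B t"
  proof (rule ccontr)
    assume "x \<notin> B t"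
    then have "s \<in> descendants N r par c1"
      using bag_in_subtree[OF td c1(1,2) _ _ \<open>s \<in> N\<close> s(2)] x unfolding c1(3) by blast
    then show False
      using descendants_children_disjoint[OF tree_decompositionD(1)[OF td] assms(2) c] s(1) by blast
  qed
qed

lemma edge_in_subtree:
  assumes td: "tree_decomposition G N r par B" and c: "c \<in> N" "c \<noteq> r"
    and e: "(l, k) \<in> edges G" and x: "x = l \<or> x = k"
    and x_inside: "x \<in> subtree_vertices N r par B c" "x \<notin> B (par c)"
  shows "l \<in> subtree_vertices N r par B c" "k \<in> subtree_vertices N r par B c"
proof -
  obtain s where s: "s \<in> N" "l \<in> B s" "k \<in> B s"
    using tree_decompositionD(3)[OF td e] by blast
  then have "s \<in> descendants N r par c"
    using bag_in_subtree[OF td c x_inside] x by blast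
  then show "l \<in> subtree_vertices N r par B c" "k \<in> subtree_vertices N r par B c"
    using s unfolding subtree_vertices_def by blast+
qed

definition trapping_sets ::
  "'v tgraph \<Rightarrow> 'n set \<Rightarrow> 'n \<Rightarrow> ('n \<Rightarrow> 'n) \<Rightarrow> ('n \<Rightarrow> 'v set) \<Rightarrow> 'n \<Rightarrow> 'v set \<Rightarrow> 'v set \<Rightarrow> 'v set set" where
  "trapping_sets G N r par B x R Q = {S. has_params G N r par B x R Q S}"

lemma f_t_eq_min_card: "f_t G N r par B x R Q = min_card (trapping_sets G N r par B x R Q)"
  by (simp add: f_t_def min_card_def trapping_sets_def)

lemma g_t_eq_count_card:
  "g_t G N r par B x R Q = count_card (trapping_sets G N r par B x R Q) (f_t G N r par B x R Q)"
  by (simp add: g_t_def count_card_def trapping_sets_def)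

lemma finite_trapping_sets:
  "tanner_graph G \<Longrightarrow> finite (trapping_sets G N r par B x R Q)"
  by (rule finite_subset[of _ "Pow (vars G)"]) (auto simp: trapping_sets_def has_params_def tanner_graph_def)

lemma has_params_iff:
  assumes "tanner_graph G"
  shows "has_params G N r par B x R Q S \<longleftrightarrow>
    S \<noteq> {} \<and> S \<subseteq> vars G \<inter> subtree_vertices N r par B x \<and> S \<inter> B x = Q \<and>
    odd_checks G (subtree_vertices N r par B x) S = R"
proof -
  have "S \<inter> (B x \<inter> vars G) = S \<inter> B x" if "S \<subseteq> vars G" using that by blast
  then show ?thesis
    unfolding has_params_def subG_eq_induced_on
    using Gamma_o_induced_by_vars[OF assms] by (auto simp: induced_on_def)
qed

section \<open>Join nodes\<close>

locale join_node =
  fixes G :: "'v tgraph" and N :: "'n set" and r :: 'n and par :: "'n \<Rightarrow> 'n"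
    and B :: "'n \<Rightarrow> 'v set" and t t1 t2 :: 'n
  assumes tanner: "tanner_graph G"
    and nice: "nice_tree_decomposition G N r par B"
    and t_in: "t \<in> N"
    and children_t: "children N r par t = {t1, t2}"
    and distinct_children: "t1 \<noteq> t2"
begin

abbreviation V :: "'n \<Rightarrow> 'v set" where
  "V \<equiv> subtree_vertices N r par B"

abbreviation TS :: "'n \<Rightarrow> 'v set \<Rightarrow> 'v set \<Rightarrow> 'v set set" where
  "TS \<equiv> trapping_sets G N r par B"

(* The hypotheses are symmetric in t1 and t2, so facts proved for t1 transfer to t2 through
   this interpretation. *)

lemma join_node_swap: "join_node G N r par B t t2 t1"
  using tanner nice t_in children_t distinct_children
  by unfold_locales (auto simp: insert_commute)

lemma tree_decomp: "tree_decomposition G N r par B"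
  using nice by (simp add: nice_tree_decomposition_def)

lemma child_bags: "B t1 = B t" "B t2 = B t"
proof -
  have "card (children N r par t) = 2" using children_t distinct_children by simp
  then show "B t1 = B t" "B t2 = B t"
    using nice t_in children_t unfolding nice_tree_decomposition_def by auto
qed

lemma t1_child: "t1 \<in> N" "t1 \<noteq> r" "par t1 = t"
  using children_t by (auto simp: children_def)

lemma bag_subset_t1: "B t \<subseteq> V t1"
  using bag_subset_subtree_vertices child_bags(1) by metis

lemma subtree_vertices_Int: "V t1 \<inter> V t2 = B t"
proof
  show "V t1 \<inter> V t2 \<subseteq> B t"
    using subtree_vertices_children_Int[OF tree_decomp t_in] children_t distinct_children by blast
  show "B t \<subseteq> V t1 \<inter> V t2"
    using bag_subset_t1 join_node.bag_subset_t1[OF join_node_swap] by blast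
qed

lemma subtree_vertices_t: "V t = V t1 \<union> V t2"
  using subtree_vertices_children[of N r par B t] children_t bag_subset_t1 by auto

lemma edge_in_t1: "(l, c) \<in> edges G \<Longrightarrow> c \<in> V t1 \<Longrightarrow> c \<notin> B t \<Longrightarrow> l \<in> V t1"
  using edge_in_subtree(1)[OF tree_decomp t1_child(1,2)] t1_child(3) by blast

lemma odd_checks_outside_bag_t1:
  assumes "c \<in> V t1" "c \<notin> B t"
  shows "c \<in> odd_checks G (V t) S \<longleftrightarrow> c \<in> odd_checks G (V t1) (S \<inter> V t1)"
proof -
  have "{l \<in> S. (l, c) \<in> edges G} = {l \<in> S \<inter> V t1. (l, c) \<in> edges G}"
    using edge_in_t1 assms by blast
  then show ?thesis
    using assms subtree_vertices_t by (simp add: odd_checks_def)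
qed

lemma odd_checks_join:
  assumes S: "S \<subseteq> vars G \<inter> V t"
  shows "odd_checks G (V t) S =
    odd_checks G (V t1) (S \<inter> V t1) \<oplus> odd_checks G (V t2) (S \<inter> V t2) \<oplus> odd_checks G (B t) (S \<inter> B t)"
proof (rule set_eqI)
  fix c
  let ?deg = "\<lambda>X. card {l \<in> X. (l, c) \<in> edges G}"
  show "c \<in> odd_checks G (V t) S \<longleftrightarrow>
    c \<in> odd_checks G (V t1) (S \<inter> V t1) \<oplus> odd_checks G (V t2) (S \<inter> V t2) \<oplus> odd_checks G (B t) (S \<inter> B t)"
  proof (cases "c \<in> B t")
    case True
    \<comment> \<open>the variables of S \<inter> B t are counted on both sides\<close>
    have "finite S"
      using S tanner finite_subset by (auto simp: tanner_graph_def)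
    moreover have "{l \<in> S \<inter> V t1. (l, c) \<in> edges G} \<union> {l \<in> S \<inter> V t2. (l, c) \<in> edges G}
        = {l \<in> S. (l, c) \<in> edges G}"
      using S subtree_vertices_t by blast
    moreover have "{l \<in> S \<inter> V t1. (l, c) \<in> edges G} \<inter> {l \<in> S \<inter> V t2. (l, c) \<in> edges G}
        = {l \<in> S \<inter> B t. (l, c) \<in> edges G}"
      using subtree_vertices_Int by blast
    ultimately have "?deg (S \<inter> V t1) + ?deg (S \<inter> V t2) = ?deg S + ?deg (S \<inter> B t)"
      using card_Un_Int[of "{l \<in> S \<inter> V t1. (l, c) \<in> edges G}" "{l \<in> S \<inter> V t2. (l, c) \<in> edges G}"]
      by simp
    then have "even (?deg S + ?deg (S \<inter> B t)) \<longleftrightarrow> even (?deg (S \<inter> V t1) + ?deg (S \<inter> V t2))"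
      by simp
    then have "odd (?deg S) \<longleftrightarrow> (odd (?deg (S \<inter> V t1)) \<noteq> odd (?deg (S \<inter> V t2))) \<noteq> odd (?deg (S \<inter> B t))"
      unfolding even_add by blast
    moreover have "c \<in> V t" "c \<in> V t1" "c \<in> V t2"
      using True subtree_vertices_Int subtree_vertices_t by auto
    ultimately show ?thesis
      using True by (cases "c \<in> checks G") (simp_all add: odd_checks_def mem_symdiff)
  next
    case False
    then consider "c \<in> V t1" "c \<notin> V t2" | "c \<in> V t2" "c \<notin> V t1" | "c \<notin> V t"
      using subtree_vertices_Int subtree_vertices_t by blast
    then show ?thesis
    proof cases
      case 1
      then show ?thesis
        using False odd_checks_outside_bag_t1 odd_checks_subset by (fastforce simp: mem_symdiff)
    next
      case 2
      then show ?thesis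
        using False join_node.odd_checks_outside_bag_t1[OF join_node_swap] odd_checks_subset
        by (fastforce simp: mem_symdiff)
    next
      case 3
      then show ?thesis
        using False subtree_vertices_t odd_checks_subset by (fastforce simp: mem_symdiff)
    qed
  qed
qed

lemma union_children_Int:
  assumes "S1 \<subseteq> V t1" "S2 \<subseteq> V t2" "S1 \<inter> B t = S2 \<inter> B t"
  shows "(S1 \<union> S2) \<inter> V t1 = S1" "(S1 \<union> S2) \<inter> V t2 = S2" "(S1 \<union> S2) \<inter> B t = S1 \<inter> B t"
    and "S1 \<inter> S2 = S1 \<inter> B t"
  using assms subtree_vertices_Int bag_subset_t1 join_node.bag_subset_t1[OF join_node_swap] by blast+

lemma has_params_union:
  assumes S1: "has_params G N r par B t1 R1 Q S1" and S2: "has_params G N r par B t2 R2 Q S2"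
  shows "has_params G N r par B t (R1 \<oplus> R2 \<oplus> odd_checks G (B t) Q) Q (S1 \<union> S2)"
    and "card (S1 \<union> S2) + card Q = card S1 + card S2"
proof -
  have S1': "S1 \<noteq> {}" "S1 \<subseteq> vars G \<inter> V t1" "S1 \<inter> B t = Q" "odd_checks G (V t1) S1 = R1"
    using S1 child_bags by (simp_all add: has_params_iff[OF tanner])
  have S2': "S2 \<subseteq> vars G \<inter> V t2" "S2 \<inter> B t = Q" "odd_checks G (V t2) S2 = R2"
    using S2 child_bags by (simp_all add: has_params_iff[OF tanner])
  note parts = union_children_Int[of S1 S2]
  have "S1 \<union> S2 \<subseteq> vars G \<inter> V t"
    using S1'(2) S2'(1) subtree_vertices_t by blast
  moreover have "odd_checks G (V t) (S1 \<union> S2) = R1 \<oplus> R2 \<oplus> odd_checks G (B t) Q"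
    using odd_checks_join[OF calculation] parts S1' S2' by auto
  ultimately show "has_params G N r par B t (R1 \<oplus> R2 \<oplus> odd_checks G (B t) Q) Q (S1 \<union> S2)"
    using S1'(1,3) parts S2' by (auto simp: has_params_iff[OF tanner])
  have "finite S1" "finite S2"
    using S1'(2) S2'(1) tanner finite_subset by (auto simp: tanner_graph_def)
  then show "card (S1 \<union> S2) + card Q = card S1 + card S2"
    using card_Un_Int[of S1 S2] parts S1' S2' by auto
qed

lemma has_params_split:
  assumes S: "has_params G N r par B t R Q S" and R: "R \<subseteq> B t"
    and meets: "S \<inter> V t1 \<noteq> {}" "S \<inter> V t2 \<noteq> {}"
  defines "R1 \<equiv> odd_checks G (V t1) (S \<inter> V t1)" and "R2 \<equiv> odd_checks G (V t2) (S \<inter> V t2)"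
  shows "has_params G N r par B t1 R1 Q (S \<inter> V t1)" "has_params G N r par B t2 R2 Q (S \<inter> V t2)"
    and "R1 \<subseteq> B t" "R2 \<subseteq> B t" "R = R1 \<oplus> R2 \<oplus> odd_checks G (B t) Q"
proof -
  have S': "S \<subseteq> vars G \<inter> V t" "S \<inter> B t = Q" "odd_checks G (V t) S = R"
    using S by (simp_all add: has_params_iff[OF tanner])
  have B_sub: "B t \<subseteq> V t1" "B t \<subseteq> V t2"
    using bag_subset_t1 join_node.bag_subset_t1[OF join_node_swap] .
  show "has_params G N r par B t1 R1 Q (S \<inter> V t1)" "has_params G N r par B t2 R2 Q (S \<inter> V t2)"
    using S' meets B_sub child_bags by (auto simp: has_params_iff[OF tanner] R1_def R2_def)
  show R_eq: "R = R1 \<oplus> R2 \<oplus> odd_checks G (B t) Q"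
    using odd_checks_join[OF S'(1)] S' B_sub by (simp add: R1_def R2_def)
  have "R1 \<subseteq> V t1" "R2 \<subseteq> V t2" "odd_checks G (B t) Q \<subseteq> B t"
    by (auto simp: R1_def R2_def odd_checks_def)
  then have "c \<in> R" if "c \<in> R1 \<union> R2" "c \<notin> B t" for c
    using that subtree_vertices_Int unfolding R_eq mem_symdiff by blast
  then show "R1 \<subseteq> B t" "R2 \<subseteq> B t"
    using R by blast+
qed

lemma join_pairs_eq:
  assumes "Q \<subseteq> B t \<inter> vars G"
  shows "join_pairs G N r par B t R Q = {(R1, R2). R1 \<subseteq> B t \<inter> checks G \<and> R2 \<subseteq> B t \<inter> checks G \<and>
    R = R1 \<oplus> R2 \<oplus> odd_checks G (B t) Q}"
proof -
  have "Gamma_o (induced_on (subG G N r par B t) (Q \<union> (B t \<inter> checks G))) = odd_checks G (B t) Q"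
    unfolding subG_eq_induced_on
    by (rule Gamma_o_induced_on_bag[OF tanner _ bag_subset_subtree_vertices]) (use assms in blast)
  then show ?thesis by (simp add: join_pairs_def)
qed

lemma finite_join_pairs: "finite (join_pairs G N r par B t R Q)"
proof (rule finite_subset)
  show "join_pairs G N r par B t R Q \<subseteq> Pow (checks G) \<times> Pow (checks G)"
    by (auto simp: join_pairs_def)
  show "finite (Pow (checks G) \<times> Pow (checks G))"
    using tanner by (simp add: tanner_graph_def)
qed

definition joined_sets :: "'v set \<Rightarrow> 'v set \<Rightarrow> 'v set set" where
  "joined_sets R Q = (\<Union>p\<in>join_pairs G N r par B t R Q.
     (\<lambda>(S1, S2). S1 \<union> S2) ` (TS t1 (fst p) Q \<times> TS t2 (snd p) Q))"

lemma finite_joined_sets: "finite (joined_sets R Q)"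
  unfolding joined_sets_def
  by (intro finite_UN_I finite_join_pairs finite_imageI finite_cartesian_product finite_trapping_sets[OF tanner])

lemma joined_sets_eq:
  assumes R: "R \<subseteq> B t \<inter> checks G" and Q: "Q \<subseteq> B t \<inter> vars G"
  shows "joined_sets R Q = {S \<in> TS t R Q. S \<inter> V t1 \<noteq> {} \<and> S \<inter> V t2 \<noteq> {}}"
proof (intro equalityI subsetI)
  fix S assume "S \<in> joined_sets R Q"
  then obtain R1 R2 S1 S2 where p: "(R1, R2) \<in> join_pairs G N r par B t R Q" and S: "S = S1 \<union> S2"
    and S1: "has_params G N r par B t1 R1 Q S1" and S2: "has_params G N r par B t2 R2 Q S2"
    by (auto simp: joined_sets_def trapping_sets_def)
  have parts: "S1 \<subseteq> V t1" "S2 \<subseteq> V t2" "S1 \<inter> B t = S2 \<inter> B t" and "S1 \<noteq> {}" "S2 \<noteq> {}"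
    using S1 S2 child_bags by (auto simp: has_params_iff[OF tanner])
  then have "S \<inter> V t1 \<noteq> {}" "S \<inter> V t2 \<noteq> {}"
    unfolding S union_children_Int(1,2)[OF parts] by simp_all
  moreover have "R = R1 \<oplus> R2 \<oplus> odd_checks G (B t) Q"
    using p by (simp add: join_pairs_eq[OF Q])
  ultimately show "S \<in> {S \<in> TS t R Q. S \<inter> V t1 \<noteq> {} \<and> S \<inter> V t2 \<noteq> {}}"
    using has_params_union(1)[OF S1 S2] S by (simp add: trapping_sets_def)
next
  fix S assume "S \<in> {S \<in> TS t R Q. S \<inter> V t1 \<noteq> {} \<and> S \<inter> V t2 \<noteq> {}}"
  then have S: "has_params G N r par B t R Q S" "S \<inter> V t1 \<noteq> {}" "S \<inter> V t2 \<noteq> {}"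
    by (simp_all add: trapping_sets_def)
  have "R \<subseteq> B t" using R by blast
  note split = has_params_split[OF S(1) this S(2,3)]
  let ?R1 = "odd_checks G (V t1) (S \<inter> V t1)" and ?R2 = "odd_checks G (V t2) (S \<inter> V t2)"
  have "?R1 \<subseteq> B t \<inter> checks G" "?R2 \<subseteq> B t \<inter> checks G"
    using split(3,4) by (auto simp: odd_checks_def)
  then have pair: "(?R1, ?R2) \<in> join_pairs G N r par B t R Q"
    using split(5) by (simp add: join_pairs_eq[OF Q])
  have parts: "(S \<inter> V t1, S \<inter> V t2) \<in> TS t1 ?R1 Q \<times> TS t2 ?R2 Q"
    using split(1,2) by (simp add: trapping_sets_def)
  have "S \<subseteq> V t"
    using S(1) by (simp add: has_params_iff[OF tanner])
  then have "(\<lambda>(S1, S2). S1 \<union> S2) (S \<inter> V t1, S \<inter> V t2) = S"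
    using subtree_vertices_t by auto
  then have "S \<in> (\<lambda>(S1, S2). S1 \<union> S2) ` (TS t1 ?R1 Q \<times> TS t2 ?R2 Q)"
    using parts by (rule image_eqI[OF sym])
  then show "S \<in> joined_sets R Q"
    unfolding joined_sets_def by (intro UN_I[OF pair]) simp
qed

lemma union_children_recovers:
  assumes "S1 \<in> TS t1 R1 Q" "S2 \<in> TS t2 R2 Q"
  shows "(S1 \<union> S2) \<inter> V t1 = S1" "(S1 \<union> S2) \<inter> V t2 = S2"
    and "R1 = odd_checks G (V t1) ((S1 \<union> S2) \<inter> V t1)" "R2 = odd_checks G (V t2) ((S1 \<union> S2) \<inter> V t2)"
proof -
  have S: "S1 \<subseteq> V t1" "S2 \<subseteq> V t2" "S1 \<inter> B t = S2 \<inter> B t"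
    and R: "R1 = odd_checks G (V t1) S1" "R2 = odd_checks G (V t2) S2"
    using assms child_bags by (auto simp: trapping_sets_def has_params_iff[OF tanner])
  show "(S1 \<union> S2) \<inter> V t1 = S1" "(S1 \<union> S2) \<inter> V t2 = S2"
    using union_children_Int(1,2)[OF S] .
  then show "R1 = odd_checks G (V t1) ((S1 \<union> S2) \<inter> V t1)" "R2 = odd_checks G (V t2) ((S1 \<union> S2) \<inter> V t2)"
    using R by simp_all
qed

lemma union_children_determines_pair:
  assumes "S \<in> (\<lambda>(S1, S2). S1 \<union> S2) ` (TS t1 R1 Q \<times> TS t2 R2 Q)"
  shows "(R1, R2) = (odd_checks G (V t1) (S \<inter> V t1), odd_checks G (V t2) (S \<inter> V t2))"
proof -
  obtain S1 S2 where "S1 \<in> TS t1 R1 Q" "S2 \<in> TS t2 R2 Q" "S = S1 \<union> S2"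
    using assms by blast
  then show ?thesis using union_children_recovers(3,4) by simp
qed

lemma inj_on_union_children: "inj_on (\<lambda>(S1, S2). S1 \<union> S2) (TS t1 R1 Q \<times> TS t2 R2 Q)"
proof (rule inj_onI, clarify)
  fix S1 S2 S1' S2'
  assume "S1 \<in> TS t1 R1 Q" "S2 \<in> TS t2 R2 Q" "S1' \<in> TS t1 R1 Q" "S2' \<in> TS t2 R2 Q"
    and "S1 \<union> S2 = S1' \<union> S2'"
  then show "S1 = S1' \<and> S2 = S2'"
    using union_children_recovers(1,2) by metis
qed

lemma card_union_children:
  "S1 \<in> TS t1 R1 Q \<Longrightarrow> S2 \<in> TS t2 R2 Q \<Longrightarrow> card (S1 \<union> S2) + card Q = card S1 + card S2"
  using has_params_union(2) by (simp add: trapping_sets_def)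

lemma min_card_joined_sets: "min_card (joined_sets R Q) = F_join G N r par B t t1 t2 R Q"
proof -
  have "min_card ((\<lambda>(S1, S2). S1 \<union> S2) ` (TS t1 R1 Q \<times> TS t2 R2 Q))
      = f_t G N r par B t1 R1 Q + f_t G N r par B t2 R2 Q - enat (card Q)" for R1 R2
    unfolding f_t_eq_min_card by (rule min_card_union_image) (rule card_union_children)
  then show ?thesis
    by (simp add: joined_sets_def min_card_UN F_join_def)
qed

lemma count_card_joined_sets:
  "count_card (joined_sets R Q) (F_join G N r par B t t1 t2 R Q) = G_join G N r par B t t1 t2 R Q"
proof -
  define F where "F = F_join G N r par B t t1 t2 R Q"
  define J where "J p = (\<lambda>(S1, S2). S1 \<union> S2) ` (TS t1 (fst p) Q \<times> TS t2 (snd p) Q)" for p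
  define h where "h p = f_t G N r par B t1 (fst p) Q + f_t G N r par B t2 (snd p) Q - enat (card Q)" for p
  have min_J: "min_card (J p) = h p" for p
    unfolding J_def h_def f_t_eq_min_card by (rule min_card_union_image) (rule card_union_children)
  have count_J: "count_card (J p) F = (if h p = F then
      g_t G N r par B t1 (fst p) Q * g_t G N r par B t2 (snd p) Q else 0)"
    if "p \<in> join_pairs G N r par B t R Q" for p
  proof -
    have "F \<le> min_card (J p)"
      unfolding F_def min_J h_def F_join_def using that by (rule INF_lower)
    moreover have "count_card (J p) (min_card (J p)) =
        g_t G N r par B t1 (fst p) Q * g_t G N r par B t2 (snd p) Q"
      unfolding J_def g_t_eq_count_card f_t_eq_min_card
      by (rule count_card_union_image[OF card_union_children inj_on_union_children])
    ultimately show ?thesis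
      using count_card_below_min min_J by metis
  qed
  have "count_card (joined_sets R Q) F = (\<Sum>p\<in>join_pairs G N r par B t R Q. count_card (J p) F)"
    unfolding joined_sets_def J_def[symmetric]
  proof (rule count_card_UN[OF finite_join_pairs])
    show "finite (J p)" for p
      unfolding J_def by (intro finite_imageI finite_cartesian_product finite_trapping_sets[OF tanner])
    have pair_of: "p = (odd_checks G (V t1) (S \<inter> V t1), odd_checks G (V t2) (S \<inter> V t2))"
      if "S \<in> J p" for S p
      using union_children_determines_pair[of S "fst p" Q "snd p"] that
      unfolding J_def by simp
    show "J p \<inter> J p' = {}" if "p \<noteq> p'" for p p'
      using pair_of[of _ p] pair_of[of _ p'] that by blast
  qed
  also have "\<dots> = G_join G N r par B t t1 t2 R Q"
    unfolding G_join_def F_def[symmetric] h_def[symmetric]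
    by (simp add: count_J sum.inter_filter finite_join_pairs)
  finally show ?thesis unfolding F_def .
qed

lemma trapping_sets_eq_joined_sets:
  assumes R: "R \<subseteq> B t \<inter> checks G" and Q: "Q \<subseteq> B t \<inter> vars G" "Q \<noteq> {}"
  shows "TS t R Q = joined_sets R Q"
proof -
  have "S \<inter> V t1 \<noteq> {} \<and> S \<inter> V t2 \<noteq> {}" if "S \<in> TS t R Q" for S
  proof -
    have "Q \<subseteq> S \<inter> V t1" "Q \<subseteq> S \<inter> V t2"
      using that subtree_vertices_Int by (auto simp: trapping_sets_def has_params_iff[OF tanner])
    then show ?thesis using Q(2) by blast
  qed
  then show ?thesis
    unfolding joined_sets_eq[OF R Q(1)] by blast
qed

lemma has_params_t1_iff:
  "has_params G N r par B t1 R {} S \<longleftrightarrow> has_params G N r par B t R {} S \<and> S \<inter> V t2 = {}"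
proof -
  have "odd_checks G (V t) S = odd_checks G (V t1) S"
    if "S \<subseteq> vars G \<inter> V t1" "S \<inter> B t = {}" for S
  proof -
    have "S \<inter> V t1 = S" "S \<inter> V t2 = {}"
      using that subtree_vertices_Int by blast+
    moreover have "S \<subseteq> vars G \<inter> V t"
      using that(1) subtree_vertices_t by blast
    ultimately show ?thesis
      using odd_checks_join that(2) by (simp add: symdiff_def)
  qed
  moreover have "S \<subseteq> V t1 \<longleftrightarrow> S \<subseteq> V t \<and> S \<inter> V t2 = {}" if "S \<inter> B t = {}"
    using that subtree_vertices_Int subtree_vertices_t by blast
  ultimately show ?thesis
    using child_bags(1) by (auto simp: has_params_iff[OF tanner])
qed

theorem join_recurrence_nonempty:
  assumes "R \<subseteq> B t \<inter> checks G" "Q \<subseteq> B t \<inter> vars G" "Q \<noteq> {}"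
  shows "f_t G N r par B t R Q = F_join G N r par B t t1 t2 R Q"
    and "g_t G N r par B t R Q = G_join G N r par B t t1 t2 R Q"
  unfolding g_t_eq_count_card f_t_eq_min_card trapping_sets_eq_joined_sets[OF assms]
  by (simp_all add: min_card_joined_sets count_card_joined_sets)

theorem join_recurrence_empty:
  assumes R: "R \<subseteq> B t \<inter> checks G"
  defines "f \<equiv> f_t G N r par B t R {}" and "F \<equiv> F_join G N r par B t t1 t2 R {}"
    and "f1 \<equiv> f_t G N r par B t1 R {}" and "f2 \<equiv> f_t G N r par B t2 R {}"
  shows "f = min F (min f1 f2)"
    and "g_t G N r par B t R {} =
      (if f = F then G_join G N r par B t t1 t2 R {} else 0) +
      (if f = f1 then g_t G N r par B t1 R {} else 0) +
      (if f = f2 then g_t G N r par B t2 R {} else 0)"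
proof -
  let ?J = "joined_sets R {}"
  have t1: "TS t1 R {} = {S \<in> TS t R {}. S \<inter> V t2 = {}}"
    using has_params_t1_iff by (simp add: trapping_sets_def)
  have t2: "TS t2 R {} = {S \<in> TS t R {}. S \<inter> V t1 = {}}"
    using join_node.has_params_t1_iff[OF join_node_swap] by (simp add: trapping_sets_def)
  have split: "TS t R {} = ?J \<union> TS t1 R {} \<union> TS t2 R {}"
    unfolding joined_sets_eq[OF R empty_subsetI] t1 t2 by auto
  have "S \<inter> V t1 \<noteq> {} \<or> S \<inter> V t2 \<noteq> {}" if "S \<in> TS t R {}" for S
    using that subtree_vertices_t by (auto simp: trapping_sets_def has_params_iff[OF tanner])
  then have disjoint: "?J \<inter> TS t1 R {} = {}" "(?J \<union> TS t1 R {}) \<inter> TS t2 R {} = {}"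
    unfolding joined_sets_eq[OF R empty_subsetI] t1 t2 by auto
  have finite: "finite ?J" "finite (TS t1 R {})" "finite (TS t2 R {})"
    using finite_joined_sets finite_trapping_sets[OF tanner] by simp_all
  show f: "f = min F (min f1 f2)"
    unfolding f_def F_def f1_def f2_def f_t_eq_min_card split min_card_Un min_card_joined_sets
    by (simp add: min.assoc)
  have le: "f \<le> F" "f \<le> f1" "f \<le> f2"
    unfolding f by (simp_all add: min.coboundedI2)
  have "count_card ?J f = (if f = F then G_join G N r par B t t1 t2 R {} else 0)"
    using count_card_below_min[of f ?J] le(1)
    unfolding min_card_joined_sets count_card_joined_sets F_def by simp
  moreover have "count_card (TS t1 R {}) f = (if f = f1 then g_t G N r par B t1 R {} else 0)"
    using count_card_below_min[of f "TS t1 R {}"] le(2)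
    unfolding f1_def f_t_eq_min_card g_t_eq_count_card by simp
  moreover have "count_card (TS t2 R {}) f = (if f = f2 then g_t G N r par B t2 R {} else 0)"
    using count_card_below_min[of f "TS t2 R {}"] le(3)
    unfolding f2_def f_t_eq_min_card g_t_eq_count_card by simp
  ultimately show "g_t G N r par B t R {} =
      (if f = F then G_join G N r par B t t1 t2 R {} else 0) +
      (if f = f1 then g_t G N r par B t1 R {} else 0) +
      (if f = f2 then g_t G N r par B t2 R {} else 0)"
    unfolding g_t_eq_count_card f_def[symmetric] split
    using finite disjoint by (simp add: count_card_Un)
qed

end

theorem mainTheorem11:
  fixes G :: "'v tgraph" and N :: "'n set" and r :: 'n and par :: "'n \<Rightarrow> 'n"
    and B :: "'n \<Rightarrow> 'v set" and t t1 t2 :: 'n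
  assumes "tanner_graph G"
    and "nice_tree_decomposition G N r par B"
    and "t \<in> N"
    and "children N r par t = {t1, t2}" and "t1 \<noteq> t2"
  shows "\<forall>R Q. R \<subseteq> B t \<inter> checks G \<longrightarrow> Q \<subseteq> B t \<inter> vars G \<longrightarrow>
     (Q \<noteq> {} \<longrightarrow>
        f_t G N r par B t R Q = F_join G N r par B t t1 t2 R Q \<and>
        g_t G N r par B t R Q = G_join G N r par B t t1 t2 R Q) \<and>
     (Q = {} \<longrightarrow>
        f_t G N r par B t R Q =
          min (F_join G N r par B t t1 t2 R Q)
              (min (f_t G N r par B t1 R Q) (f_t G N r par B t2 R Q)) \<and>
        (f_t G N r par B t R Q \<noteq> \<infinity> \<longrightarrow>
          g_t G N r par B t R Q =
            (if f_t G N r par B t R Q = F_join G N r par B t t1 t2 R Q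
               then G_join G N r par B t t1 t2 R Q else 0) +
            (if f_t G N r par B t R Q = f_t G N r par B t1 R Q
               then g_t G N r par B t1 R Q else 0) +
            (if f_t G N r par B t R Q = f_t G N r par B t2 R Q
               then g_t G N r par B t2 R Q else 0)))"
proof -
  interpret join_node G N r par B t t1 t2
    using assms by unfold_locales
  show ?thesis
  proof (intro allI impI conjI)
    fix R Q assume R: "R \<subseteq> B t \<inter> checks G" and Q: "Q \<subseteq> B t \<inter> vars G"
    show "f_t G N r par B t R Q = F_join G N r par B t t1 t2 R Q"
      and "g_t G N r par B t R Q = G_join G N r par B t t1 t2 R Q" if "Q \<noteq> {}"
      using join_recurrence_nonempty[OF R Q that] by simp_all
    show "f_t G N r par B t R Q =
        min (F_join G N r par B t t1 t2 R Q) (min (f_t G N r par B t1 R Q) (f_t G N r par B t2 R Q))"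
      and "g_t G N r par B t R Q =
        (if f_t G N r par B t R Q = F_join G N r par B t t1 t2 R Q
           then G_join G N r par B t t1 t2 R Q else 0) +
        (if f_t G N r par B t R Q = f_t G N r par B t1 R Q then g_t G N r par B t1 R Q else 0) +
        (if f_t G N r par B t R Q = f_t G N r par B t2 R Q then g_t G N r par B t2 R Q else 0)"
      if "Q = {}"
      using join_recurrence_empty[OF R] unfolding that by simp_all
  qed
qed

end
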